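(* Consider the multiobjective composite problem $\min_{x\in\mathbb{R}^n} F(x)$ with $F=(F_1,\dots,F_m)$, $F_i=f_i+g_i$, where each $f_i:\mathbb{R}^n\to\mathbb{R}$ is twice continuously differentiable and each $g_i$ is proper, convex and lower semicontinuous. Suppose each $f_i$, $i\in[m]$, is $\mu$-strongly convex for some $\mu>0$. Let $\{x^k\}$ be the (infinite) sequence generated by the Newton-type proximal gradient method described in the context. Then $\{x^k\}$ converges to some Pareto solution $x^*$ of the problem.
   Context: Notation: $[m]=\{1,\dots,m\}$. For $u,v\in\mathbb{R}^m$, $u\preceq v$ means $v-u\in\mathbb{R}^m_+$ and $u\prec v$ means $v-u\in\mathbb{R}^m_{++}$. A point $x^*$ is a Pareto solution if there is no $x$ with $F(x)\preceq F(x^* )$ and $F(x)\neq F(x^* )$. A twice continuously differentiable $h$ is $\mu$-strongly convex if $\mu I\preceq \nabla^2 h(x)$ (in the positive semidefinite order) for all $x$. Newton-type proximal gradient method: for $x\in\mathbb{R}^n$ let $d(x)=\arg\min_{d\in\mathbb{R}^n}\max_{i\in[m]}\{\langle\nabla f_i(x),d\rangle+g_i(x+d)-g_i(x)+\tfrac12\langle d,\nabla^2 f_i(x)d\rangle\}$ and let $\theta(x)$ be the optimal value of this problem. Given $x^0\in\mathbb{R}^n$ and parameters $\sigma,\gamma\in(0,1)$, at iteration $k$ compute $d^k=d(x^k)$, $\theta^k=\theta(x^k)$, choose the stepsize $t_k\in(0,1]$ as the largest element of $\{\gamma^j: j\in\mathbb{N},\ F_i(x^k+\gamma^j d^k)-F_i(x^k)\le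 \gamma^j\sigma\theta^k \text{ for all } i\in[m]\}$, and set $x^{k+1}=x^k+t_kd^k$. Standing assumption: the method generates an infinite sequence of points that are not Pareto critical (i.e. $d^k\neq 0$ for all $k$, the method never stops). *)

theory Defs
  imports "HOL-Analysis.Analysis"
begin

definition proper_fun :: "('a \<Rightarrow> ereal) \<Rightarrow> bool" where
  "proper_fun g \<longleftrightarrow> (\<forall>x. g x \<noteq> -\<infinity>) \<and> (\<exists>x. g x \<noteq> \<infinity>)"

definition ereal_convex_fun :: "('a::real_vector \<Rightarrow> ereal) \<Rightarrow> bool" where
  "ereal_convex_fun g \<longleftrightarrow>
     (\<forall>x y t. 0 < t \<and> t < 1 \<longrightarrow>
        g ((1 - t) *\<^sub>R x + t *\<^sub>R y) \<le> ereal (1 - t) * g x + ereal t * g y)"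

definition lsc_fun :: "('a::topological_space \<Rightarrow> ereal) \<Rightarrow> bool" where
  "lsc_fun g \<longleftrightarrow> (\<forall>x. g x \<le> Liminf (at x) g)"

definition newton_subobj ::
  "nat \<Rightarrow> (nat \<Rightarrow> real^'n \<Rightarrow> real^'n) \<Rightarrow> (nat \<Rightarrow> real^'n \<Rightarrow> real^'n^'n)
     \<Rightarrow> (nat \<Rightarrow> real^'n \<Rightarrow> ereal) \<Rightarrow> real^'n \<Rightarrow> real^'n \<Rightarrow> ereal" where
  "newton_subobj m Df H g x d =
     Max ((\<lambda>i. ereal (Df i x \<bullet> d) + g i (x + d) - g i x + ereal (d \<bullet> (H i x *v d) / 2)) ` {1..m})"

definition pareto_solution ::
  "nat \<Rightarrow> (nat \<Rightarrow> 'a \<Rightarrow> ereal) \<Rightarrow> 'a \<Rightarrow> bool" where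
  "pareto_solution m F xs \<longleftrightarrow>
     \<not> (\<exists>x. (\<forall>i\<in>{1..m}. F i x \<le> F i xs) \<and> (\<exists>i\<in>{1..m}. F i x \<noteq> F i xs))"

end

theory Submission
  imports Defs
begin

(* Every F i decreases along the iterates by at least t k \<sigma> |\<theta> k|, so the iterates stay in a
   sublevel set of the strongly convex F 1, hence are bounded, and F i (x k) decreases to a limit
   L i.  Testing the subproblem with d k / 2 gives \<theta> k \<le> - \<mu>/4 |d k|^2, and with a Hessian
   bound \<Lambda> near the iterates the Armijo test accepts every step below min 1 (\<mu>/\<Lambda>) (1/|d k|);
   since the t k |\<theta> k| are summable, \<theta> k \<rightarrow> 0.  Testing it with s (y - x k) then shows that at
   every cluster point p, for every y some F i y \<ge> L i + \<mu>/2 |y - p|^2, while lower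
   semicontinuity gives F i p \<le> L i.  So p is the only point with all F i \<le> L i: it is the
   unique cluster point, hence the limit, and nothing dominates it. *)

lemma second_order_taylor_unit_interval:
  fixes p p' p'' :: "real \<Rightarrow> real"
  assumes "\<And>s. s \<in> {0..1} \<Longrightarrow> (p has_real_derivative p' s) (at s)"
    and "\<And>s. s \<in> {0..1} \<Longrightarrow> (p' has_real_derivative p'' s) (at s)"
  shows "\<exists>\<tau>\<in>{0..1}. p 1 = p 0 + p' 0 + p'' \<tau> / 2"
proof -
  define diff where "diff k = (if k = 0 then p else if k = 1 then p' else p'')" for k :: nat
  have "\<exists>\<tau>. 0 < \<tau> \<and> \<tau> < 1 \<and>
      p 1 = (\<Sum>k<2. diff k 0 / fact k * 1 ^ k) + diff 2 \<tau> / fact 2 * 1 ^ 2"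
    by (rule Maclaurin) (use assms in \<open>auto simp: diff_def less_2_cases_iff\<close>)
  then show ?thesis
    by (auto simp: diff_def numeral_2_eq_2 lessThan_Suc)
qed

lemma second_order_taylor_segment:
  fixes f :: "'a::real_inner \<Rightarrow> real"
  assumes f': "\<And>y. (f has_derivative (\<lambda>h. Df y \<bullet> h)) (at y)"
    and f'': "\<And>y. (Df has_derivative Hess y) (at y)"
  shows "\<exists>\<tau>\<in>{0..1}. f (y + v) = f y + Df y \<bullet> v + v \<bullet> Hess (y + \<tau> *\<^sub>R v) v / 2"
proof -
  have line: "((\<lambda>s. y + s *\<^sub>R v) has_derivative (\<lambda>h. h *\<^sub>R v)) (at s)" for s
    by (auto intro!: derivative_eq_intros)
  have "((\<lambda>s. f (y + s *\<^sub>R v)) has_real_derivative Df (y + s *\<^sub>R v) \<bullet> v) (at s)" for s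
    using has_derivative_compose[OF line f']
    by (auto intro: has_derivative_imp_has_field_derivative simp: inner_scaleR_right)
  moreover have "((\<lambda>s. Df (y + s *\<^sub>R v) \<bullet> v) has_real_derivative v \<bullet> Hess (y + s *\<^sub>R v) v) (at s)" for s
  proof -
    have lin: "linear (Hess (y + s *\<^sub>R v))"
      using f'' has_derivative_linear by blast
    have "((\<lambda>s. Df (y + s *\<^sub>R v) \<bullet> v) has_derivative (\<lambda>h. Hess (y + s *\<^sub>R v) (h *\<^sub>R v) \<bullet> v)) (at s)"
      using has_derivative_compose[OF line f''] by (auto intro!: derivative_eq_intros)
    then show ?thesis
      by (rule has_derivative_imp_has_field_derivative)
         (simp add: linear_scale[OF lin] inner_commute inner_scaleR_right)
  qed
  ultimately show ?thesis
    using second_order_taylor_unit_interval[of "\<lambda>s. f (y + s *\<^sub>R v)"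
        "\<lambda>s. Df (y + s *\<^sub>R v) \<bullet> v" "\<lambda>s. v \<bullet> Hess (y + s *\<^sub>R v) v"] by simp
qed

lemma strongly_convex_first_order:
  fixes f :: "'a::real_inner \<Rightarrow> real"
  assumes f': "\<And>y. (f has_derivative (\<lambda>h. Df y \<bullet> h)) (at y)"
    and f'': "\<And>y. (Df has_derivative Hess y) (at y)"
    and strong: "\<And>y v. \<mu> * (v \<bullet> v) \<le> v \<bullet> Hess y v"
  shows "f y + Df y \<bullet> (z - y) + \<mu> / 2 * ((z - y) \<bullet> (z - y)) \<le> f z"
proof -
  obtain \<tau> where "f z = f y + Df y \<bullet> (z - y) + (z - y) \<bullet> Hess (y + \<tau> *\<^sub>R (z - y)) (z - y) / 2"
    using second_order_taylor_segment[OF f' f'', of y "z - y"] by auto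
  with strong[where y = "y + \<tau> *\<^sub>R (z - y)" and v = "z - y"] show ?thesis by simp
qed

lemma strongly_convex_on_segment:
  fixes f :: "'a::real_inner \<Rightarrow> real"
  assumes first_order: "\<And>y z. f y + Df y \<bullet> (z - y) + \<mu> / 2 * ((z - y) \<bullet> (z - y)) \<le> f z"
    and l: "0 \<le> l" "l \<le> 1"
  shows "f ((1 - l) *\<^sub>R a + l *\<^sub>R b)
    \<le> (1 - l) * f a + l * f b - \<mu> / 2 * (l * (1 - l)) * ((b - a) \<bullet> (b - a))"
proof -
  define z where "z = (1 - l) *\<^sub>R a + l *\<^sub>R b"
  define D where "D = Df z \<bullet> (b - a)"
  define W where "W = (b - a) \<bullet> (b - a)"
  have "a - z = (- l) *\<^sub>R (b - a)" "b - z = (1 - l) *\<^sub>R (b - a)"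
    unfolding z_def by (simp_all add: algebra_simps)
  then have "f z - l * D + \<mu> / 2 * (l * l * W) \<le> f a"
    and "f z + (1 - l) * D + \<mu> / 2 * ((1 - l) * (1 - l) * W) \<le> f b"
    using first_order[of z a] first_order[of z b] unfolding D_def W_def
    by (simp_all add: inner_scaleR_left inner_scaleR_right)
  then have "(1 - l) * (f z - l * D + \<mu> / 2 * (l * l * W))
      + l * (f z + (1 - l) * D + \<mu> / 2 * ((1 - l) * (1 - l) * W)) \<le> (1 - l) * f a + l * f b"
    using l by (intro add_mono mult_left_mono) auto
  moreover have "(1 - l) * (f z - l * D + \<mu> / 2 * (l * l * W))
      + l * (f z + (1 - l) * D + \<mu> / 2 * ((1 - l) * (1 - l) * W))
      = f z + \<mu> / 2 * (l * (1 - l)) * W"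
    by (simp add: algebra_simps add_divide_distrib[symmetric] diff_divide_distrib[symmetric])
  ultimately show ?thesis
    unfolding z_def[symmetric] W_def[symmetric] by linarith
qed

lemma ereal_convex_fun_finite:
  fixes g :: "'a::real_vector \<Rightarrow> ereal"
  assumes "ereal_convex_fun g" "g a = ereal ga" "g b = ereal gb" "0 \<le> s" "s \<le> 1"
  shows "g ((1 - s) *\<^sub>R a + s *\<^sub>R b) \<le> ereal ((1 - s) * ga + s * gb)"
proof -
  consider "s = 0" | "s = 1" | "0 < s" "s < 1" using assms(4,5) by linarith
  then show ?thesis
  proof cases
    case 3
    then have "g ((1 - s) *\<^sub>R a + s *\<^sub>R b) \<le> ereal (1 - s) * g a + ereal s * g b"
      using assms(1) unfolding ereal_convex_fun_def by blast
    then show ?thesis using assms(2,3) by simp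
  qed (use assms in auto)
qed

lemma lsc_fun_eventually_greater:
  fixes g :: "'a::metric_space \<Rightarrow> ereal"
  assumes "lsc_fun g" "X \<longlonglongrightarrow> a" "c < g a"
  shows "eventually (\<lambda>j. c < g (X j)) sequentially"
proof -
  have "c < Liminf (at a) g" using assms(1,3) unfolding lsc_fun_def by (meson order_less_le_trans)
  then have "eventually (\<lambda>z. c < g z) (at a)" by (rule less_LiminfD)
  then have "eventually (\<lambda>z. c < g z) (nhds a)"
    using assms(3) unfolding eventually_at_filter by (auto elim: eventually_mono)
  then show ?thesis using assms(2) by (rule eventually_compose_filterlim)
qed

lemma lsc_fun_le_limit:
  fixes g :: "'a::metric_space \<Rightarrow> ereal"
  assumes "lsc_fun g" "X \<longlonglongrightarrow> a" "(\<lambda>j. g (X j)) \<longlonglongrightarrow> c"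
  shows "g a \<le> c"
proof (rule ccontr)
  assume "\<not> g a \<le> c"
  then have "c < g a" by simp
  then obtain b where "c < b" "b < g a" using dense by blast
  then have "eventually (\<lambda>j. b < g (X j)) sequentially"
    and "eventually (\<lambda>j. g (X j) < b) sequentially"
    using lsc_fun_eventually_greater[OF assms(1,2)] order_tendstoD(2)[OF assms(3)] by auto
  then have "eventually (\<lambda>j. False) sequentially"
    by eventually_elim auto
  then show False by simp
qed

lemma lsc_fun_bounded_below_on_compact:
  fixes g :: "'a::metric_space \<Rightarrow> ereal"
  assumes "lsc_fun g" "\<And>z. g z \<noteq> -\<infinity>" "compact S"
  obtains M where "\<And>z. z \<in> S \<Longrightarrow> ereal M \<le> g z"
proof (rule ccontr)
  assume "\<not> thesis"
  with that have "\<forall>n::nat. \<exists>z\<in>S. g z < ereal (- real n)" by (meson not_le)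
  then obtain X where X: "\<And>n. X n \<in> S" "\<And>n. g (X n) < ereal (- real n)" by metis
  obtain l r where l: "l \<in> S" "strict_mono r" "(X \<circ> r) \<longlonglongrightarrow> l"
    using seq_compactE[OF compact_imp_seq_compact[OF assms(3)]] X(1) by metis
  have "(\<lambda>j. g ((X \<circ> r) j)) \<longlonglongrightarrow> -\<infinity>"
    unfolding tendsto_MInfty
  proof
    fix c
    show "eventually (\<lambda>j. g ((X \<circ> r) j) < ereal c) sequentially"
    proof (rule eventually_sequentiallyI)
      fix j assume "nat \<lceil>- c\<rceil> \<le> j"
      then have "- real (r j) \<le> c" using seq_suble[OF l(2), of j] by linarith
      then show "g ((X \<circ> r) j) < ereal c" using X(2)[of "r j"] by (simp add: order_less_le_trans)
    qed
  qed
  with lsc_fun_le_limit[OF assms(1) l(3)] have "g l \<le> -\<infinity>" by blast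
  with assms(2) show False by simp
qed

lemma matrix_quadratic_form_le:
  fixes A :: "real^'n^'n"
  shows "v \<bullet> (A *v v) \<le> real CARD('n) * real CARD('n) * norm A * (v \<bullet> v)"
proof -
  have "onorm ((*v) A) \<le> real CARD('n) * real CARD('n) * norm A"
    by (rule onorm_le_matrix_component)
       (meson order_trans component_le_norm_cart Finite_Cartesian_Product.norm_nth_le)
  then have "norm (A *v v) \<le> real CARD('n) * real CARD('n) * norm A * norm v"
    by (meson order_trans onorm matrix_vector_mul_bounded_linear mult_right_mono norm_ge_zero)
  then have "norm v * norm (A *v v) \<le> norm v * (real CARD('n) * real CARD('n) * norm A * norm v)"
    by (simp add: mult_left_mono)
  with norm_cauchy_schwarz[of v "A *v v"] show ?thesis
    by (simp add: dot_square_norm power2_eq_square mult_ac)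
qed

lemma tendsto_if_subsequential_limits_unique:
  fixes X :: "nat \<Rightarrow> 'a::heine_borel"
  assumes bounded: "bounded (range X)"
    and unique: "\<And>r q. strict_mono r \<Longrightarrow> (X \<circ> r) \<longlonglongrightarrow> q \<Longrightarrow> q = p"
  shows "X \<longlonglongrightarrow> p"
proof (rule ccontr)
  assume "\<not> X \<longlonglongrightarrow> p"
  then obtain e where e: "e > 0" "\<forall>N. \<exists>n\<ge>N. e \<le> dist (X n) p"
    unfolding lim_sequentially by (auto simp: not_less)
  then have "infinite {n. e \<le> dist (X n) p}"
    by (simp add: infinite_nat_iff_unbounded_le)
  then obtain s :: "nat \<Rightarrow> nat" where s: "strict_mono s" "\<And>n. e \<le> dist (X (s n)) p"
    using infinite_enumerate by blast
  have "bounded (range (X \<circ> s))" using bounded by (rule bounded_subset) auto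
  then obtain r q where r: "strict_mono r" "((X \<circ> s) \<circ> r) \<longlonglongrightarrow> q"
    using bounded_imp_convergent_subsequence by blast
  have "q = p" using unique[OF strict_mono_o[OF s(1) r(1)]] r(2) by (simp add: comp_assoc)
  have "e \<le> dist q p"
    by (rule LIMSEQ_le_const[OF tendsto_dist[OF r(2) tendsto_const]]) (use s(2) in auto)
  with \<open>q = p\<close> \<open>e > 0\<close> show False by simp
qed

lemma strongly_convex_sublevel_bounded:
  fixes f :: "'a::real_inner \<Rightarrow> real" and g :: "'a \<Rightarrow> ereal"
  assumes first_order: "\<And>y z. f y + Df y \<bullet> (z - y) + \<mu> / 2 * ((z - y) \<bullet> (z - y)) \<le> f z"
    and \<mu>: "0 < \<mu>"
    and g: "ereal_convex_fun g" "g c = ereal gc" "g z = ereal gz"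
    and lower: "\<And>u. u \<in> cball c 1 \<Longrightarrow> ereal M \<le> ereal (f u) + g u"
    and sublevel: "f z + gz \<le> f c + gc"
  shows "norm (z - c) \<le> 1 + 2 * (f c + gc - M) / \<mu>"
proof -
  define r where "r = norm (z - c)"
  have "M \<le> f c + gc" using lower[of c] g(2) by simp
  then have margin: "0 \<le> 2 * (f c + gc - M) / \<mu>" using \<mu> by simp
  show ?thesis
  proof (cases "r \<le> 1")
    case False
    define l where "l = 1 / r"
    have l: "0 \<le> l" "l \<le> 1" "l * r = 1" using False unfolding l_def by auto
    define u where "u = (1 - l) *\<^sub>R c + l *\<^sub>R z"
    have "u - c = l *\<^sub>R (z - c)" unfolding u_def by (simp add: algebra_simps)
    then have "norm (u - c) = 1" using l unfolding r_def by simp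
    then have "u \<in> cball c 1" by (simp add: dist_norm norm_minus_commute)
    then have "ereal M \<le> ereal (f u) + g u" by (rule lower)
    also have "\<dots> \<le> ereal (f u) + ereal ((1 - l) * gc + l * gz)"
      unfolding u_def using ereal_convex_fun_finite[OF g l(1,2)] by (rule add_left_mono)
    finally have "M \<le> f u + gc - l * gc + l * gz" by (simp add: algebra_simps)
    moreover have "f u \<le> f c - l * f c + l * f z - \<mu> / 2 * (r - 1)"
    proof -
      have "f u \<le> (1 - l) * f c + l * f z - \<mu> / 2 * (l * (1 - l)) * (r * r)"
        using strongly_convex_on_segment[OF first_order l(1,2), of c z]
        unfolding u_def r_def by (simp add: dot_square_norm power2_eq_square)
      moreover have "\<mu> / 2 * (l * (1 - l)) * (r * r) = \<mu> / 2 * (r - 1)"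
        using l by (simp add: algebra_simps)
      moreover have "(1 - l) * f c = f c - l * f c" by (simp add: algebra_simps)
      ultimately show ?thesis by linarith
    qed
    moreover have "l * f z + l * gz \<le> l * f c + l * gc"
      using mult_left_mono[OF sublevel l(1)] by (simp add: algebra_simps)
    ultimately have "M \<le> f c + gc - \<mu> / 2 * (r - 1)" by linarith
    then show ?thesis using \<mu> unfolding r_def by (simp add: field_simps)
  qed (use margin r_def in simp)
qed

locale prox_newton_method =
  fixes m :: nat
    and f :: "nat \<Rightarrow> real^'n \<Rightarrow> real"
    and Df :: "nat \<Rightarrow> real^'n \<Rightarrow> real^'n"
    and H :: "nat \<Rightarrow> real^'n \<Rightarrow> real^'n^'n"
    and g :: "nat \<Rightarrow> real^'n \<Rightarrow> ereal"
    and \<mu> \<sigma> \<gamma> :: real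
    and x d :: "nat \<Rightarrow> real^'n"
    and \<theta> :: "nat \<Rightarrow> ereal"
    and t :: "nat \<Rightarrow> real"
  assumes m_pos: "0 < m"
    and grad: "\<And>i y. i \<in> {1..m} \<Longrightarrow> (f i has_derivative (\<lambda>h. Df i y \<bullet> h)) (at y)"
    and hess: "\<And>i y. i \<in> {1..m} \<Longrightarrow> (Df i has_derivative (\<lambda>h. H i y *v h)) (at y)"
    and hess_cont: "\<And>i. i \<in> {1..m} \<Longrightarrow> continuous_on UNIV (H i)"
    and g_proper: "\<And>i. i \<in> {1..m} \<Longrightarrow> proper_fun (g i)"
    and g_convex: "\<And>i. i \<in> {1..m} \<Longrightarrow> ereal_convex_fun (g i)"
    and g_lsc: "\<And>i. i \<in> {1..m} \<Longrightarrow> lsc_fun (g i)"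
    and mu_pos: "0 < \<mu>"
    and strong: "\<And>i y v. i \<in> {1..m} \<Longrightarrow> \<mu> * (v \<bullet> v) \<le> v \<bullet> (H i y *v v)"
    and sigma: "0 < \<sigma>" "\<sigma> < 1"
    and gamma: "0 < \<gamma>" "\<gamma> < 1"
    and x0_dom: "\<And>i. i \<in> {1..m} \<Longrightarrow> g i (x 0) \<noteq> \<infinity>"
    and d_min: "\<And>k e. newton_subobj m Df H g (x k) (d k) \<le> newton_subobj m Df H g (x k) e"
    and theta_def: "\<And>k. \<theta> k = newton_subobj m Df H g (x k) (d k)"
    and t_mem: "\<And>k. \<exists>j. t k = \<gamma> ^ j \<and>
        (\<forall>i\<in>{1..m}. (ereal (f i (x k + \<gamma> ^ j *\<^sub>R d k)) + g i (x k + \<gamma> ^ j *\<^sub>R d k))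
                      - (ereal (f i (x k)) + g i (x k)) \<le> ereal (\<gamma> ^ j * \<sigma>) * \<theta> k)"
    and t_max: "\<And>k j. (\<forall>i\<in>{1..m}. (ereal (f i (x k + \<gamma> ^ j *\<^sub>R d k)) + g i (x k + \<gamma> ^ j *\<^sub>R d k))
                      - (ereal (f i (x k)) + g i (x k)) \<le> ereal (\<gamma> ^ j * \<sigma>) * \<theta> k)
                 \<Longrightarrow> \<gamma> ^ j \<le> t k"
    and x_step: "\<And>k. x (Suc k) = x k + t k *\<^sub>R d k"
    and d_nonzero: "\<And>k. d k \<noteq> 0"
begin

lemma one_in_objectives: "1 \<in> {1..m}"
  using m_pos by simp

lemma g_not_MInf: "i \<in> {1..m} \<Longrightarrow> g i z \<noteq> -\<infinity>"
  using g_proper unfolding proper_fun_def by blast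

lemma f_first_order:
  "i \<in> {1..m} \<Longrightarrow> f i y + Df i y \<bullet> (z - y) + \<mu> / 2 * ((z - y) \<bullet> (z - y)) \<le> f i z"
  by (rule strongly_convex_first_order[where Hess = "\<lambda>y h. H i y *v h"]) (use grad hess strong in auto)

definition newton_term :: "nat \<Rightarrow> real^'n \<Rightarrow> real^'n \<Rightarrow> ereal" where
  "newton_term i z e = ereal (Df i z \<bullet> e) + g i (z + e) - g i z + ereal (e \<bullet> (H i z *v e) / 2)"

lemma newton_term_le_newton_subobj: "i \<in> {1..m} \<Longrightarrow> newton_term i z e \<le> newton_subobj m Df H g z e"
  unfolding newton_subobj_def newton_term_def by (rule Max_ge) auto

lemma newton_subobj_le: "(\<And>i. i \<in> {1..m} \<Longrightarrow> newton_term i z e \<le> c) \<Longrightarrow> newton_subobj m Df H g z e \<le> c"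
  unfolding newton_subobj_def newton_term_def using m_pos by (subst Max_le_iff) auto

lemma theta_le_newton_subobj: "\<theta> k \<le> newton_subobj m Df H g (x k) e"
  using theta_def d_min by simp

lemma newton_term_zero: "g i z \<noteq> \<infinity> \<Longrightarrow> i \<in> {1..m} \<Longrightarrow> newton_term i z 0 = 0"
  using g_not_MInf unfolding newton_term_def by (cases "g i z") auto

lemma newton_term_not_MInf: "g i z \<noteq> \<infinity> \<Longrightarrow> i \<in> {1..m} \<Longrightarrow> newton_term i z e \<noteq> -\<infinity>"
  using g_not_MInf[of i z] g_not_MInf[of i "z + e"] unfolding newton_term_def
  by (cases "g i z"; cases "g i (z + e)") auto

lemma step_size_bounds: "0 < t k" "t k \<le> 1"
  using t_mem[of k] gamma by (auto simp: power_le_one)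

lemma armijo_at_iterate:
  "i \<in> {1..m} \<Longrightarrow> ereal (f i (x (Suc k))) + g i (x (Suc k)) - (ereal (f i (x k)) + g i (x k))
     \<le> ereal (t k * \<sigma>) * \<theta> k"
  using t_mem[of k] x_step[of k] by auto

lemma theta_nonpos_if_finite:
  assumes "\<And>i. i \<in> {1..m} \<Longrightarrow> g i (x k) \<noteq> \<infinity>"
  shows "\<theta> k \<le> 0"
proof -
  have "\<theta> k \<le> newton_subobj m Df H g (x k) 0" by (rule theta_le_newton_subobj)
  also have "\<dots> \<le> 0" by (rule newton_subobj_le) (use assms newton_term_zero in simp)
  finally show ?thesis .
qed

lemma g_iterate_finite: "i \<in> {1..m} \<Longrightarrow> g i (x k) \<noteq> \<infinity>"
proof (induction k arbitrary: i)
  case 0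
  then show ?case by (rule x0_dom)
next
  case (Suc k)
  have "\<theta> k \<le> 0" by (rule theta_nonpos_if_finite) (rule Suc.IH)
  then have "ereal (t k * \<sigma>) * \<theta> k \<le> 0"
    using ereal_mult_left_mono[of "\<theta> k" 0 "ereal (t k * \<sigma>)"] step_size_bounds[of k] sigma by simp
  with armijo_at_iterate[OF Suc.prems, of k]
  have "ereal (f i (x (Suc k))) + g i (x (Suc k)) - (ereal (f i (x k)) + g i (x k)) \<le> 0"
    by (rule order_trans)
  moreover obtain r where "g i (x k) = ereal r"
    using Suc.IH[OF Suc.prems] g_not_MInf[OF Suc.prems, of "x k"] by (cases "g i (x k)") auto
  ultimately show ?case by auto
qed

(* Real versions of g i (x k), F i (x k), \<theta> k and g i (x k + d k); the lemmas below show that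
   none of these ereal values is infinite, so real_of_ereal loses nothing. *)

definition gx :: "nat \<Rightarrow> nat \<Rightarrow> real" where "gx i k = real_of_ereal (g i (x k))"
definition Fx :: "nat \<Rightarrow> nat \<Rightarrow> real" where "Fx i k = f i (x k) + gx i k"
definition th :: "nat \<Rightarrow> real" where "th k = real_of_ereal (newton_subobj m Df H g (x k) (d k))"
definition gxd :: "nat \<Rightarrow> nat \<Rightarrow> real" where "gxd i k = real_of_ereal (g i (x k + d k))"

lemma g_iterate_eq: "i \<in> {1..m} \<Longrightarrow> g i (x k) = ereal (gx i k)"
  unfolding gx_def using g_iterate_finite g_not_MInf by (cases "g i (x k)") auto

lemma theta_eq: "\<theta> k = ereal (th k)"
proof -
  have "newton_term 1 (x k) (d k) \<le> \<theta> k"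
    unfolding theta_def by (rule newton_term_le_newton_subobj[OF one_in_objectives])
  then have "\<theta> k \<noteq> -\<infinity>"
    using newton_term_not_MInf[OF g_iterate_finite one_in_objectives] one_in_objectives by auto
  moreover have "\<theta> k \<le> 0" by (rule theta_nonpos_if_finite) (rule g_iterate_finite)
  ultimately show ?thesis unfolding th_def theta_def[symmetric] by (cases "\<theta> k") auto
qed

lemma th_nonpos: "th k \<le> 0"
  using theta_nonpos_if_finite[of k, OF g_iterate_finite] unfolding theta_eq by simp

lemma Fx_descent:
  assumes "i \<in> {1..m}"
  shows "Fx i (Suc k) \<le> Fx i k + t k * \<sigma> * th k"
proof -
  have "f i (x (Suc k)) + gx i (Suc k) - (f i (x k) + gx i k) \<le> t k * \<sigma> * th k"
    using armijo_at_iterate[OF assms, of k] unfolding g_iterate_eq[OF assms] theta_eq by simp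
  then show ?thesis unfolding Fx_def by linarith
qed

lemma Fx_antimono:
  assumes "i \<in> {1..m}" "k \<le> l"
  shows "Fx i l \<le> Fx i k"
  using assms(2)
proof (induction l rule: dec_induct)
  case (step l)
  have "t l * \<sigma> * th l \<le> 0"
    using step_size_bounds[of l] sigma th_nonpos[of l] by (simp add: mult_nonneg_nonpos)
  with Fx_descent[OF assms(1), of l] step.IH show ?case by linarith
qed simp

lemma g_newton_point_eq: "i \<in> {1..m} \<Longrightarrow> g i (x k + d k) = ereal (gxd i k)"
proof -
  assume i: "i \<in> {1..m}"
  have "newton_term i (x k) (d k) \<le> \<theta> k"
    unfolding theta_def by (rule newton_term_le_newton_subobj[OF i])
  then have "g i (x k + d k) \<noteq> \<infinity>"
    unfolding newton_term_def theta_eq g_iterate_eq[OF i] by auto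
  then show ?thesis unfolding gxd_def using g_not_MInf[OF i] by (cases "g i (x k + d k)") auto
qed

lemma newton_term_at_direction:
  assumes i: "i \<in> {1..m}"
  shows "Df i (x k) \<bullet> d k + gxd i k - gx i k + d k \<bullet> (H i (x k) *v d k) / 2 \<le> th k"
  using newton_term_le_newton_subobj[OF i, of "x k" "d k"]
  unfolding theta_def[symmetric] newton_term_def g_newton_point_eq[OF i] g_iterate_eq[OF i] theta_eq
  by simp

lemma newton_term_along_segment:
  assumes i: "i \<in> {1..m}" and gz: "g i z = ereal a" and gw: "g i w = ereal b"
    and s: "0 \<le> s" "s \<le> 1"
  shows "newton_term i z (s *\<^sub>R (w - z))
    \<le> ereal (s * (Df i z \<bullet> (w - z) + b - a) + s\<^sup>2 * ((w - z) \<bullet> (H i z *v (w - z))) / 2)"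
proof -
  have "z + s *\<^sub>R (w - z) = (1 - s) *\<^sub>R z + s *\<^sub>R w" by (simp add: algebra_simps)
  then have "g i (z + s *\<^sub>R (w - z)) \<le> ereal ((1 - s) * a + s * b)"
    using ereal_convex_fun_finite[OF g_convex[OF i] gz gw s] by simp
  moreover have "g i (z + s *\<^sub>R (w - z)) \<noteq> -\<infinity>" by (rule g_not_MInf[OF i])
  ultimately obtain c where "g i (z + s *\<^sub>R (w - z)) = ereal c" "c \<le> (1 - s) * a + s * b"
    by (cases "g i (z + s *\<^sub>R (w - z))") auto
  then show ?thesis
    unfolding newton_term_def gz
    by (simp add: matrix_vector_mult_scaleR inner_scaleR_left inner_scaleR_right power2_eq_square
        algebra_simps)
qed

lemma th_le_neg_norm_sq: "th k \<le> - \<mu> / 4 * (d k \<bullet> d k)"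
proof -
  have "\<theta> k \<le> newton_subobj m Df H g (x k) ((1 / 2) *\<^sub>R d k)"
    by (rule theta_le_newton_subobj)
  also have "\<dots> \<le> ereal (th k / 2 - \<mu> / 8 * (d k \<bullet> d k))"
  proof (rule newton_subobj_le)
    fix i assume i: "i \<in> {1..m}"
    have "\<mu> * (d k \<bullet> d k) \<le> d k \<bullet> (H i (x k) *v d k)" by (rule strong[OF i])
    with newton_term_at_direction[OF i, of k]
    have "(1 / 2) * (Df i (x k) \<bullet> d k + gxd i k - gx i k) + (1 / 2)\<^sup>2 * (d k \<bullet> (H i (x k) *v d k)) / 2
        \<le> th k / 2 - \<mu> / 8 * (d k \<bullet> d k)"
      by (simp add: power2_eq_square field_simps)
    moreover have "newton_term i (x k) ((1 / 2) *\<^sub>R d k) \<le> ereal ((1 / 2) *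
        (Df i (x k) \<bullet> d k + gxd i k - gx i k) + (1 / 2)\<^sup>2 * (d k \<bullet> (H i (x k) *v d k)) / 2)"
      using newton_term_along_segment[OF i g_iterate_eq[OF i, of k] g_newton_point_eq[OF i, of k],
          of "1 / 2"] by simp
    ultimately show "newton_term i (x k) ((1 / 2) *\<^sub>R d k) \<le> ereal (th k / 2 - \<mu> / 8 * (d k \<bullet> d k))"
      by (meson ereal_less_eq(3) order_trans)
  qed
  finally show ?thesis unfolding theta_eq by simp
qed

lemma f_continuous_on: "i \<in> {1..m} \<Longrightarrow> continuous_on S (f i)"
  using grad by (meson has_derivative_continuous continuous_at_imp_continuous_on)

lemma F_bounded_below_on_compact:
  assumes i: "i \<in> {1..m}" and S: "compact S"
  obtains M where "\<And>z. z \<in> S \<Longrightarrow> ereal M \<le> ereal (f i z) + g i z"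
proof -
  obtain Mg where Mg: "\<And>z. z \<in> S \<Longrightarrow> ereal Mg \<le> g i z"
    using lsc_fun_bounded_below_on_compact[OF g_lsc[OF i] g_not_MInf[OF i] S] by blast
  have "bounded (f i ` S)"
    by (rule compact_imp_bounded[OF compact_continuous_image[OF f_continuous_on[OF i] S]])
  then obtain B where B: "\<And>z. z \<in> S \<Longrightarrow> \<bar>f i z\<bar> \<le> B" by (auto simp: bounded_iff)
  have "ereal (- B + Mg) \<le> ereal (f i z) + g i z" if "z \<in> S" for z
    using add_mono[of "ereal (- B)" "ereal (f i z)" "ereal Mg" "g i z"] B[OF that] Mg[OF that] by simp
  then show ?thesis using that by blast
qed

lemma iterates_bounded: "bounded (range x)"
proof -
  obtain M where M: "\<And>u. u \<in> cball (x 0) 1 \<Longrightarrow> ereal M \<le> ereal (f 1 u) + g 1 u"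
    using F_bounded_below_on_compact[OF one_in_objectives compact_cball] by blast
  have "norm (x k - x 0) \<le> 1 + 2 * (Fx 1 0 - M) / \<mu>" for k
    using strongly_convex_sublevel_bounded[where f = "f 1" and Df = "Df 1" and g = "g 1",
        OF f_first_order[OF one_in_objectives] mu_pos
        g_convex[OF one_in_objectives] g_iterate_eq[OF one_in_objectives, of 0]
        g_iterate_eq[OF one_in_objectives, of k] M]
      Fx_antimono[OF one_in_objectives, of 0 k]
    unfolding Fx_def by simp
  then have "range x \<subseteq> cball (x 0) (1 + 2 * (Fx 1 0 - M) / \<mu>)"
    by (auto simp: dist_norm norm_minus_commute)
  then show ?thesis by (rule bounded_subset[OF bounded_cball])
qed

lemma hessian_bounded_on_compact:
  assumes "compact S"
  obtains \<Lambda> where "0 < \<Lambda>" "\<And>i z v. i \<in> {1..m} \<Longrightarrow> z \<in> S \<Longrightarrow> v \<bullet> (H i z *v v) \<le> \<Lambda> * (v \<bullet> v)"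
proof -
  have "compact (\<Union>i\<in>{1..m}. H i ` S)"
    using compact_continuous_image[OF continuous_on_subset[OF hess_cont subset_UNIV] assms]
    by (intro compact_UN) auto
  then have "bounded (\<Union>i\<in>{1..m}. H i ` S)" by (rule compact_imp_bounded)
  then obtain B where B: "0 < B" "\<And>i z. i \<in> {1..m} \<Longrightarrow> z \<in> S \<Longrightarrow> norm (H i z) \<le> B"
    unfolding bounded_pos by auto
  show ?thesis
  proof
    show "0 < real CARD('n) * real CARD('n) * B" using B(1) by simp
    fix i z and v :: "real^'n" assume "i \<in> {1..m}" "z \<in> S"
    with B(2) have "real CARD('n) * real CARD('n) * norm (H i z) * (v \<bullet> v)
        \<le> real CARD('n) * real CARD('n) * B * (v \<bullet> v)"
      by (simp add: mult_left_mono mult_right_mono)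
    with matrix_quadratic_form_le[of v "H i z"]
    show "v \<bullet> (H i z *v v) \<le> real CARD('n) * real CARD('n) * B * (v \<bullet> v)" by linarith
  qed
qed

definition L :: "nat \<Rightarrow> real" where "L i = lim (Fx i)"

lemma Fx_tendsto_L: "i \<in> {1..m} \<Longrightarrow> Fx i \<longlonglongrightarrow> L i"
  and L_le_Fx: "i \<in> {1..m} \<Longrightarrow> L i \<le> Fx i k"
proof -
  assume i: "i \<in> {1..m}"
  obtain c R where R: "range x \<subseteq> cball c R"
    using iterates_bounded unfolding bounded_subset_cball by blast
  obtain M where M: "\<And>z. z \<in> cball c R \<Longrightarrow> ereal M \<le> ereal (f i z) + g i z"
    using F_bounded_below_on_compact[OF i compact_cball] by blast
  have "M \<le> Fx i k" for k
  proof -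
    have "x k \<in> cball c R" using R by (rule range_subsetD)
    from M[OF this] show ?thesis unfolding Fx_def g_iterate_eq[OF i] by simp
  qed
  moreover have "decseq (Fx i)"
    using Fx_antimono[OF i] by (simp add: decseq_def)
  ultimately obtain l where "Fx i \<longlonglongrightarrow> l" "\<forall>k. l \<le> Fx i k"
    using decseq_convergent by blast
  then show "Fx i \<longlonglongrightarrow> L i" "L i \<le> Fx i k" unfolding L_def by (auto simp: limI)
qed

end

(* The radius R + 1 also covers the trial points x k + s d k with s |d k| \<le> 1. *)

locale prox_newton_method_bounded = prox_newton_method +
  fixes R \<Lambda> :: real
  assumes iterates_in_ball: "\<And>k. norm (x k) \<le> R"
    and Lambda_pos: "0 < \<Lambda>"
    and hessian_le: "\<And>i z v. i \<in> {1..m} \<Longrightarrow> z \<in> cball 0 (R + 1) \<Longrightarrow> v \<bullet> (H i z *v v) \<le> \<Lambda> * (v \<bullet> v)"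
begin

lemma f_upper_quadratic:
  assumes i: "i \<in> {1..m}" and v: "norm v \<le> 1"
  shows "f i (x k + v) \<le> f i (x k) + Df i (x k) \<bullet> v + \<Lambda> / 2 * (v \<bullet> v)"
proof -
  obtain \<tau> where \<tau>: "\<tau> \<in> {0..1}"
    and taylor: "f i (x k + v) = f i (x k) + Df i (x k) \<bullet> v + v \<bullet> (H i (x k + \<tau> *\<^sub>R v) *v v) / 2"
    using second_order_taylor_segment[where Hess = "\<lambda>y h. H i y *v h", OF grad[OF i] hess[OF i]]
    by blast
  have "norm (x k + \<tau> *\<^sub>R v) \<le> norm (x k) + \<tau> * norm v"
    using norm_triangle_ineq[of "x k" "\<tau> *\<^sub>R v"] \<tau> by simp
  also have "\<dots> \<le> R + 1"
    using iterates_in_ball[of k] mult_le_one[of \<tau> "norm v"] \<tau> v by simp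
  finally have "v \<bullet> (H i (x k + \<tau> *\<^sub>R v) *v v) \<le> \<Lambda> * (v \<bullet> v)"
    by (intro hessian_le[OF i]) simp
  with taylor show ?thesis by simp
qed

lemma armijo_holds:
  assumes s: "0 < s" "s \<le> 1" "s * \<Lambda> \<le> \<mu>" "s * norm (d k) \<le> 1"
  shows "\<forall>i\<in>{1..m}. ereal (f i (x k + s *\<^sub>R d k)) + g i (x k + s *\<^sub>R d k)
            - (ereal (f i (x k)) + g i (x k)) \<le> ereal (s * \<sigma>) * \<theta> k"
proof
  fix i assume i: "i \<in> {1..m}"
  define D Q N where "D = Df i (x k) \<bullet> d k" and "Q = d k \<bullet> (H i (x k) *v d k)" and "N = d k \<bullet> d k"
  have "x k + s *\<^sub>R d k = (1 - s) *\<^sub>R x k + s *\<^sub>R (x k + d k)" by (simp add: algebra_simps)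
  then have "g i (x k + s *\<^sub>R d k) \<le> ereal ((1 - s) * gx i k + s * gxd i k)"
    using ereal_convex_fun_finite[OF g_convex[OF i] g_iterate_eq[OF i] g_newton_point_eq[OF i]] s
    by simp
  with g_not_MInf[OF i] obtain c where gc: "g i (x k + s *\<^sub>R d k) = ereal c"
    and c: "c \<le> gx i k - s * gx i k + s * gxd i k"
    by (cases "g i (x k + s *\<^sub>R d k)") (auto simp: algebra_simps)
  have "f i (x k + s *\<^sub>R d k) \<le> f i (x k) + s * D + s * s * \<Lambda> * N / 2"
    using f_upper_quadratic[OF i, of "s *\<^sub>R d k" k] s
    by (simp add: D_def N_def inner_scaleR_left inner_scaleR_right mult_ac)
  moreover have "s * (D + gxd i k - gx i k + Q / 2) \<le> s * th k"
    using newton_term_at_direction[OF i, of k] s(1) unfolding D_def Q_def by simp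
  moreover have "s * s * \<Lambda> * N \<le> s * Q"
  proof -
    have "s * \<Lambda> * N \<le> \<mu> * N" using s(3) by (simp add: N_def mult_right_mono)
    also have "\<dots> \<le> Q" unfolding N_def Q_def by (rule strong[OF i])
    finally show ?thesis using s(1) by (simp add: mult_left_mono mult.assoc)
  qed
  moreover have "s * th k \<le> s * \<sigma> * th k"
    using th_nonpos[of k] s(1) sigma by (simp add: mult_le_cancel_left_pos mult_le_cancel_right)
  ultimately have "f i (x k + s *\<^sub>R d k) + c - (f i (x k) + gx i k) \<le> s * \<sigma> * th k"
    using c by (simp add: algebra_simps)
  then show "ereal (f i (x k + s *\<^sub>R d k)) + g i (x k + s *\<^sub>R d k)
      - (ereal (f i (x k)) + g i (x k)) \<le> ereal (s * \<sigma>) * \<theta> k"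
    unfolding gc g_iterate_eq[OF i] theta_eq by simp
qed

lemma step_size_lower_bound: "\<gamma> * min 1 (min (\<mu> / \<Lambda>) (1 / norm (d k))) \<le> t k"
proof -
  define r where "r = min 1 (min (\<mu> / \<Lambda>) (1 / norm (d k)))"
  have r: "0 < r" "r \<le> 1" "r * \<Lambda> \<le> \<mu>" "r * norm (d k) \<le> 1"
  proof -
    show "0 < r" "r \<le> 1" unfolding r_def using mu_pos Lambda_pos d_nonzero[of k] by auto
    have "r \<le> \<mu> / \<Lambda>" "r \<le> 1 / norm (d k)" unfolding r_def by auto
    then show "r * \<Lambda> \<le> \<mu>" "r * norm (d k) \<le> 1"
      using Lambda_pos d_nonzero[of k] by (simp_all add: field_simps)
  qed
  obtain n where "\<gamma> ^ n < r" using real_arch_pow_inv[OF r(1) gamma(2)] by blast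
  define j where "j = (LEAST n. \<gamma> ^ n \<le> r)"
  have j: "\<gamma> ^ j \<le> r" unfolding j_def by (rule LeastI[of _ n]) (use \<open>\<gamma> ^ n < r\<close> in simp)
  have "\<gamma> * r \<le> \<gamma> ^ j"
  proof (cases j)
    case 0
    then show ?thesis using gamma r(1,2) mult_le_one[of \<gamma> r] by simp
  next
    case (Suc j')
    then have "r < \<gamma> ^ j'" using not_less_Least[of j' "\<lambda>n. \<gamma> ^ n \<le> r"] unfolding j_def by simp
    then show ?thesis using Suc gamma by simp
  qed
  also have "\<gamma> ^ j \<le> t k"
  proof (rule t_max, rule armijo_holds)
    show "0 < \<gamma> ^ j" using gamma by simp
    show "\<gamma> ^ j \<le> 1" using j r(2) by simp
    show "\<gamma> ^ j * \<Lambda> \<le> \<mu>" using mult_right_mono[OF j less_imp_le[OF Lambda_pos]] r(3) by linarith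
    show "\<gamma> ^ j * norm (d k) \<le> 1" using mult_right_mono[OF j norm_ge_zero[of "d k"]] r(4) by linarith
  qed
  finally show ?thesis unfolding r_def .
qed

lemma summable_decrease: "summable (\<lambda>k. t k * - th k)"
proof (rule summableI_nonneg_bounded)
  show "0 \<le> t k * - th k" for k
    using step_size_bounds(1)[of k] th_nonpos[of k] by (simp add: mult_nonneg_nonpos)
  show "(\<Sum>k<n. t k * - th k) \<le> (Fx 1 0 - L 1) / \<sigma>" for n
  proof -
    have "\<sigma> * (\<Sum>k<n. t k * - th k) \<le> Fx 1 0 - Fx 1 n"
    proof (induction n)
      case (Suc n)
      with Fx_descent[OF one_in_objectives, of n] show ?case by (simp add: algebra_simps)
    qed simp
    with L_le_Fx[OF one_in_objectives, of n] sigma show ?thesis by (simp add: field_simps)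
  qed
qed

(* The step size is at least a constant or at least a multiple of 1 / |d k|; in the second case
   th_le_neg_norm_sq makes -th k at most quadratic in t k * - th k. *)

lemma neg_th_le_decrease:
  fixes k :: nat
  defines "a \<equiv> t k * - th k"
  shows "- th k \<le> a / (\<gamma> * min 1 (\<mu> / \<Lambda>)) + 4 * a\<^sup>2 / (\<gamma>\<^sup>2 * \<mu>)"
proof -
  define \<rho> N T where "\<rho> = min 1 (\<mu> / \<Lambda>)" and "N = norm (d k)" and "T = - th k"
  have pos: "0 < \<rho>" "0 < N" "0 \<le> T" "0 \<le> a"
    unfolding \<rho>_def N_def T_def a_def
    using mu_pos Lambda_pos d_nonzero th_nonpos step_size_bounds(1)[of k]
    by (auto simp: mult_nonneg_nonpos)
  have a: "a = t k * T" unfolding a_def T_def ..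
  have t: "\<gamma> * min \<rho> (1 / N) \<le> t k"
    using step_size_lower_bound[of k] unfolding \<rho>_def N_def by (simp add: min.assoc)
  have NT: "\<mu> * (N * N) \<le> 4 * T"
    using th_le_neg_norm_sq[of k] unfolding T_def N_def by (simp add: dot_square_norm power2_eq_square)
  consider "\<rho> \<le> 1 / N" | "1 / N < \<rho>" by linarith
  then have "T \<le> a / (\<gamma> * \<rho>) + 4 * a\<^sup>2 / (\<gamma>\<^sup>2 * \<mu>)"
  proof cases
    case 1
    with t have "\<gamma> * \<rho> * T \<le> a" unfolding a using pos(3) by (simp add: mult_right_mono)
    then have "T \<le> a / (\<gamma> * \<rho>)" using pos(1) gamma by (simp add: field_simps)
    then show ?thesis using pos mu_pos by (simp add: add_increasing2)
  next
    case 2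
    with t have "\<gamma> / N \<le> t k" by simp
    then have "\<gamma> / N * T \<le> a" unfolding a using pos(3) by (rule mult_right_mono)
    then have "\<gamma> * T \<le> a * N" using pos(2) by (simp add: field_simps)
    then have "(\<gamma> * T)\<^sup>2 \<le> (a * N)\<^sup>2" using gamma pos by (intro power_mono) auto
    also have "\<dots> = a\<^sup>2 * (N * N)" by (simp add: power2_eq_square)
    also have "\<dots> \<le> a\<^sup>2 * (4 * T / \<mu>)" using NT mu_pos by (intro mult_left_mono) (auto simp: field_simps)
    finally have "T * (T * (\<gamma>\<^sup>2 * \<mu>)) \<le> T * (4 * a\<^sup>2)"
      using mu_pos by (simp add: field_simps power2_eq_square)
    then have "T * (\<gamma>\<^sup>2 * \<mu>) \<le> 4 * a\<^sup>2" using pos(3)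
      by (cases "T = 0") (auto simp: mult_le_cancel_left_pos)
    then have "T \<le> 4 * a\<^sup>2 / (\<gamma>\<^sup>2 * \<mu>)" using mu_pos gamma by (simp add: field_simps)
    then show ?thesis using pos(1,4) gamma by (simp add: add_increasing)
  qed
  then show ?thesis unfolding \<rho>_def T_def .
qed

lemma th_tendsto_zero: "th \<longlonglongrightarrow> 0"
proof -
  define c1 c2 where "c1 = \<gamma> * min 1 (\<mu> / \<Lambda>)" and "c2 = \<gamma>\<^sup>2 * \<mu>"
  have c: "c1 \<noteq> 0" "c2 \<noteq> 0" unfolding c1_def c2_def using gamma mu_pos Lambda_pos by (simp_all add: min_def)
  have "(\<lambda>k. t k * - th k) \<longlonglongrightarrow> 0" by (rule summable_LIMSEQ_zero[OF summable_decrease])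
  then have "(\<lambda>k. (t k * - th k) / c1 + 4 * (t k * - th k)\<^sup>2 / c2) \<longlonglongrightarrow> 0 / c1 + 4 * 0\<^sup>2 / c2"
    by (intro tendsto_intros c)
  then have upper: "(\<lambda>k. (t k * - th k) / c1 + 4 * (t k * - th k)\<^sup>2 / c2) \<longlonglongrightarrow> 0" by simp
  have "(\<lambda>k. - th k) \<longlonglongrightarrow> 0"
  proof (rule tendsto_sandwich[OF _ _ tendsto_const upper])
    show "eventually (\<lambda>k. 0 \<le> - th k) sequentially" using th_nonpos by simp
    show "eventually (\<lambda>k. - th k \<le> (t k * - th k) / c1 + 4 * (t k * - th k)\<^sup>2 / c2) sequentially"
      unfolding c1_def c2_def using neg_th_le_decrease by simp
  qed
  then show ?thesis using tendsto_minus[of "\<lambda>k. - th k" 0] by simp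
qed

lemma th_le_toward_point:
  assumes s: "0 \<le> s" "s \<le> 1" and gy: "\<And>i. i \<in> {1..m} \<Longrightarrow> g i y = ereal (b i)"
    and below: "\<And>i. i \<in> {1..m} \<Longrightarrow> f i y + b i - Fx i k \<le> B"
  shows "th k \<le> s * (B - \<mu> / 2 * ((y - x k) \<bullet> (y - x k))) + s\<^sup>2 * (\<Lambda> * ((y - x k) \<bullet> (y - x k))) / 2"
    (is "_ \<le> ?rhs")
proof -
  define w where "w = y - x k"
  have "\<theta> k \<le> newton_subobj m Df H g (x k) (s *\<^sub>R w)" by (rule theta_le_newton_subobj)
  also have "\<dots> \<le> ereal ?rhs"
  proof (rule newton_subobj_le)
    fix i assume i: "i \<in> {1..m}"
    have "f i (x k) + Df i (x k) \<bullet> w + \<mu> / 2 * (w \<bullet> w) \<le> f i y"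
      using f_first_order[OF i, of "x k" y] unfolding w_def .
    with below[OF i] have "s * (Df i (x k) \<bullet> w + b i - gx i k) \<le> s * (B - \<mu> / 2 * (w \<bullet> w))"
      using s(1) unfolding Fx_def by (intro mult_left_mono) auto
    moreover have "s\<^sup>2 * (w \<bullet> (H i (x k) *v w)) \<le> s\<^sup>2 * (\<Lambda> * (w \<bullet> w))"
      using hessian_le[OF i, of "x k" w] iterates_in_ball[of k] by (intro mult_left_mono) auto
    moreover have "newton_term i (x k) (s *\<^sub>R w)
        \<le> ereal (s * (Df i (x k) \<bullet> w + b i - gx i k) + s\<^sup>2 * (w \<bullet> (H i (x k) *v w)) / 2)"
      using newton_term_along_segment[OF i g_iterate_eq[OF i, of k] gy[OF i] s] unfolding w_def .
    ultimately show "newton_term i (x k) (s *\<^sub>R w) \<le> ereal ?rhs"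
      unfolding w_def[symmetric] by (simp add: order_trans)
  qed
  finally show ?thesis unfolding theta_eq by simp
qed

(* Stepping from x k a fraction s towards y lowers the model by about s \<delta>, whereas th k
   tends to 0; for small s the quadratic term s^2 \<Lambda> W / 2 cannot make up for it. *)

lemma uniform_gap_nonpos_at_cluster_point:
  assumes \<phi>: "strict_mono \<phi>" and p: "(x \<circ> \<phi>) \<longlonglongrightarrow> p"
    and gy: "\<And>i. i \<in> {1..m} \<Longrightarrow> g i y = ereal (b i)"
    and below: "\<And>i k. i \<in> {1..m} \<Longrightarrow> f i y + b i - Fx i k \<le> \<mu> / 2 * ((y - p) \<bullet> (y - p)) - \<delta>"
  shows "\<delta> \<le> 0"
proof (rule ccontr)
  assume "\<not> \<delta> \<le> 0"
  then have \<delta>: "0 < \<delta>" by simp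
  define W where "W = (y - p) \<bullet> (y - p)"
  define s where "s = min 1 (\<delta> / (\<Lambda> * W + 1))"
  have W: "0 \<le> W" unfolding W_def by simp
  have s: "0 < s" "s \<le> 1" "s * (\<Lambda> * W) < \<delta>"
  proof -
    show "0 < s" "s \<le> 1" unfolding s_def using \<delta> Lambda_pos W by (auto simp: add_nonneg_pos)
    have "0 < \<Lambda> * W + 1" using Lambda_pos W by (simp add: add_nonneg_pos)
    moreover have "s \<le> \<delta> / (\<Lambda> * W + 1)" unfolding s_def by simp
    ultimately have "s * (\<Lambda> * W + 1) \<le> \<delta>" by (simp add: field_simps)
    then show "s * (\<Lambda> * W) < \<delta>" using \<open>0 < s\<close> by (simp add: algebra_simps)
  qed
  have "(\<lambda>j. s * (\<mu> / 2 * W - \<delta> - \<mu> / 2 * ((y - x (\<phi> j)) \<bullet> (y - x (\<phi> j))))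
      + s\<^sup>2 * (\<Lambda> * ((y - x (\<phi> j)) \<bullet> (y - x (\<phi> j)))) / 2)
    \<longlonglongrightarrow> s * (\<mu> / 2 * W - \<delta> - \<mu> / 2 * W) + s\<^sup>2 * (\<Lambda> * W) / 2"
    using p unfolding W_def o_def by (intro tendsto_intros) simp_all
  moreover have "(\<lambda>j. th (\<phi> j)) \<longlonglongrightarrow> 0"
    using LIMSEQ_subseq_LIMSEQ[OF th_tendsto_zero \<phi>] by (simp add: o_def)
  ultimately have "0 \<le> s * (\<mu> / 2 * W - \<delta> - \<mu> / 2 * W) + s\<^sup>2 * (\<Lambda> * W) / 2"
    using th_le_toward_point[OF less_imp_le[OF s(1)] s(2) gy below[unfolded W_def[symmetric]]]
    by (intro LIMSEQ_le) auto
  moreover have "s * (s * (\<Lambda> * W)) \<le> s * \<delta>" using s by (simp add: mult_left_mono)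
  ultimately show False using s(1) \<delta> by (simp add: power2_eq_square algebra_simps)
qed

lemma L_le_at_cluster_point:
  assumes \<phi>: "strict_mono \<phi>" and p: "(x \<circ> \<phi>) \<longlonglongrightarrow> p"
  shows "\<exists>i\<in>{1..m}. ereal (L i + \<mu> / 2 * ((y - p) \<bullet> (y - p))) \<le> ereal (f i y) + g i y"
proof (rule ccontr)
  define W where "W = (y - p) \<bullet> (y - p)"
  assume "\<not> ?thesis"
  then have less: "\<And>i. i \<in> {1..m} \<Longrightarrow> ereal (f i y) + g i y < ereal (L i + \<mu> / 2 * W)"
    unfolding W_def by (auto simp: not_le)
  define b where "b i = real_of_ereal (g i y)" for i
  have gy: "g i y = ereal (b i)" if i: "i \<in> {1..m}" for i
    using less[OF i] g_not_MInf[OF i, of y] unfolding b_def by (cases "g i y") auto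
  define \<delta> where "\<delta> = Min ((\<lambda>i. L i + \<mu> / 2 * W - f i y - b i) ` {1..m})"
  have "0 < L i + \<mu> / 2 * W - f i y - b i" if "i \<in> {1..m}" for i
    using less[OF that] unfolding gy[OF that] by simp
  then have "0 < \<delta>"
    unfolding \<delta>_def using m_pos by (subst Min_gr_iff) auto
  moreover have "f i y + b i - Fx i k \<le> \<mu> / 2 * W - \<delta>" if i: "i \<in> {1..m}" for i k
  proof -
    have "\<delta> \<le> L i + \<mu> / 2 * W - f i y - b i" unfolding \<delta>_def using i by (intro Min_le) auto
    with L_le_Fx[OF i, of k] show ?thesis by linarith
  qed
  ultimately show False
    using uniform_gap_nonpos_at_cluster_point[OF \<phi> p gy] unfolding W_def by fastforce
qed

lemma F_le_L_at_cluster_point: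
  assumes \<phi>: "strict_mono \<phi>" and p: "(x \<circ> \<phi>) \<longlonglongrightarrow> p" and i: "i \<in> {1..m}"
  shows "ereal (f i p) + g i p \<le> ereal (L i)"
proof -
  have "(\<lambda>j. f i ((x \<circ> \<phi>) j)) \<longlonglongrightarrow> f i p"
    using continuous_on_tendsto_compose[OF f_continuous_on[OF i, of UNIV] p] by simp
  then have "(\<lambda>j. Fx i (\<phi> j) - f i ((x \<circ> \<phi>) j)) \<longlonglongrightarrow> L i - f i p"
    using LIMSEQ_subseq_LIMSEQ[OF Fx_tendsto_L[OF i] \<phi>] unfolding o_def by (intro tendsto_intros)
  then have "(\<lambda>j. g i ((x \<circ> \<phi>) j)) \<longlonglongrightarrow> ereal (L i - f i p)"
    unfolding o_def Fx_def g_iterate_eq[OF i] by (simp add: tendsto_ereal)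
  then have "g i p \<le> ereal (L i - f i p)" by (rule lsc_fun_le_limit[OF g_lsc[OF i] p])
  then have "ereal (f i p) + g i p \<le> ereal (f i p) + ereal (L i - f i p)" by (rule add_left_mono)
  then show ?thesis by simp
qed

lemma eq_cluster_point_if_below_levels:
  assumes "strict_mono \<phi>" "(x \<circ> \<phi>) \<longlonglongrightarrow> p"
    and below: "\<And>i. i \<in> {1..m} \<Longrightarrow> ereal (f i y) + g i y \<le> ereal (L i)"
  shows "y = p"
proof -
  obtain i where "i \<in> {1..m}" "ereal (L i + \<mu> / 2 * ((y - p) \<bullet> (y - p))) \<le> ereal (f i y) + g i y"
    using L_le_at_cluster_point[OF assms(1,2)] by blast
  with below have "\<mu> / 2 * ((y - p) \<bullet> (y - p)) \<le> 0" using order_trans by fastforce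
  with mu_pos have "(y - p) \<bullet> (y - p) \<le> 0" by (simp add: mult_le_0_iff)
  then show ?thesis by (metis inner_ge_zero inner_eq_zero_iff order_antisym eq_iff_diff_eq_0)
qed

lemma tendsto_pareto_solution:
  "\<exists>xs. x \<longlonglongrightarrow> xs \<and> pareto_solution m (\<lambda>i y. ereal (f i y) + g i y) xs"
proof -
  have bounded: "bounded (range x)"
    using iterates_in_ball by (auto simp: bounded_iff)
  then obtain \<phi> p where \<phi>: "strict_mono \<phi>" and p: "(x \<circ> \<phi>) \<longlonglongrightarrow> p"
    using bounded_imp_convergent_subsequence by blast
  have "x \<longlonglongrightarrow> p"
  proof (rule tendsto_if_subsequential_limits_unique[OF bounded])
    fix \<psi> q assume "strict_mono \<psi>" "(x \<circ> \<psi>) \<longlonglongrightarrow> q"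
    then show "q = p"
      by (intro eq_cluster_point_if_below_levels[OF \<phi> p] F_le_L_at_cluster_point)
  qed
  moreover have "pareto_solution m (\<lambda>i y. ereal (f i y) + g i y) p"
    unfolding pareto_solution_def
  proof
    assume "\<exists>y. (\<forall>i\<in>{1..m}. ereal (f i y) + g i y \<le> ereal (f i p) + g i p)
      \<and> (\<exists>i\<in>{1..m}. ereal (f i y) + g i y \<noteq> ereal (f i p) + g i p)"
    then obtain y where dominates: "\<And>i. i \<in> {1..m} \<Longrightarrow> ereal (f i y) + g i y \<le> ereal (f i p) + g i p"
      and differs: "\<exists>i\<in>{1..m}. ereal (f i y) + g i y \<noteq> ereal (f i p) + g i p"
      by blast
    have "y = p"
      using eq_cluster_point_if_below_levels[OF \<phi> p] dominates F_le_L_at_cluster_point[OF \<phi> p]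
      by (meson order_trans)
    with differs show False by simp
  qed
  ultimately show ?thesis by blast
qed

end

lemma (in prox_newton_method) iterates_tendsto_pareto_solution:
  "\<exists>xs. x \<longlonglongrightarrow> xs \<and> pareto_solution m (\<lambda>i y. ereal (f i y) + g i y) xs"
proof -
  obtain R where R: "\<And>k. norm (x k) \<le> R"
    using iterates_bounded by (auto simp: bounded_iff)
  obtain \<Lambda> where "0 < \<Lambda>"
    "\<And>i z v. i \<in> {1..m} \<Longrightarrow> z \<in> cball 0 (R + 1) \<Longrightarrow> v \<bullet> (H i z *v v) \<le> \<Lambda> * (v \<bullet> v)"
    using hessian_bounded_on_compact[OF compact_cball] by blast
  with R interpret prox_newton_method_bounded m f Df H g \<mu> \<sigma> \<gamma> x d \<theta> t R \<Lambda>
    by unfold_locales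
  show ?thesis by (rule tendsto_pareto_solution)
qed

theorem theorem2:
  fixes m :: nat
    and f :: "nat \<Rightarrow> real^'n \<Rightarrow> real"
    and Df :: "nat \<Rightarrow> real^'n \<Rightarrow> real^'n"
    and H :: "nat \<Rightarrow> real^'n \<Rightarrow> real^'n^'n"
    and g :: "nat \<Rightarrow> real^'n \<Rightarrow> ereal"
    and \<mu> \<sigma> \<gamma> :: real
    and x d :: "nat \<Rightarrow> real^'n"
    and \<theta> :: "nat \<Rightarrow> ereal"
    and t :: "nat \<Rightarrow> real"
  assumes m_pos: "0 < m"
    and grad: "\<And>i y. i \<in> {1..m} \<Longrightarrow> (f i has_derivative (\<lambda>h. Df i y \<bullet> h)) (at y)"
    and hess: "\<And>i y. i \<in> {1..m} \<Longrightarrow> (Df i has_derivative (\<lambda>h. H i y *v h)) (at y)"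
    and hess_cont: "\<And>i. i \<in> {1..m} \<Longrightarrow> continuous_on UNIV (H i)"
    and g_proper: "\<And>i. i \<in> {1..m} \<Longrightarrow> proper_fun (g i)"
    and g_convex: "\<And>i. i \<in> {1..m} \<Longrightarrow> ereal_convex_fun (g i)"
    and g_lsc: "\<And>i. i \<in> {1..m} \<Longrightarrow> lsc_fun (g i)"
    and mu_pos: "0 < \<mu>"
    and strong: "\<And>i y v. i \<in> {1..m} \<Longrightarrow> \<mu> * (v \<bullet> v) \<le> v \<bullet> (H i y *v v)"
    and sigma: "0 < \<sigma>" "\<sigma> < 1"
    and gamma: "0 < \<gamma>" "\<gamma> < 1"
    and x0_dom: "\<And>i. i \<in> {1..m} \<Longrightarrow> g i (x 0) \<noteq> \<infinity>"
    and d_min: "\<And>k e. newton_subobj m Df H g (x k) (d k) \<le> newton_subobj m Df H g (x k) e"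
    and theta_def: "\<And>k. \<theta> k = newton_subobj m Df H g (x k) (d k)"
    and t_mem: "\<And>k. \<exists>j. t k = \<gamma> ^ j \<and>
        (\<forall>i\<in>{1..m}. (ereal (f i (x k + \<gamma> ^ j *\<^sub>R d k)) + g i (x k + \<gamma> ^ j *\<^sub>R d k))
                      - (ereal (f i (x k)) + g i (x k)) \<le> ereal (\<gamma> ^ j * \<sigma>) * \<theta> k)"
    and t_max: "\<And>k j. (\<forall>i\<in>{1..m}. (ereal (f i (x k + \<gamma> ^ j *\<^sub>R d k)) + g i (x k + \<gamma> ^ j *\<^sub>R d k))
                      - (ereal (f i (x k)) + g i (x k)) \<le> ereal (\<gamma> ^ j * \<sigma>) * \<theta> k)
                 \<Longrightarrow> \<gamma> ^ j \<le> t k"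
    and x_step: "\<And>k. x (Suc k) = x k + t k *\<^sub>R d k"
    and d_nonzero: "\<And>k. d k \<noteq> 0"
  shows "\<exists>xs. x \<longlonglongrightarrow> xs \<and>
           pareto_solution m (\<lambda>i y. ereal (f i y) + g i y) xs"
proof -
  interpret prox_newton_method m f Df H g \<mu> \<sigma> \<gamma> x d \<theta> t
    using assms by (rule prox_newton_method.intro)
  show ?thesis by (rule iterates_tendsto_pareto_solution)
qed

end
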